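(* Let $\mathcal{C}$ be a category and $\mathcal{W}$ a class of morphisms of $\mathcal{C}$ satisfying (L0) and (L1) below. Let $\mathcal{W}_L$ be the class of morphisms of $\mathcal{C}$ generated under composition by $\mathcal{W}$ together with all split monomorphisms of $\mathcal{C}$. Then for every $w'\in\mathcal{W}_L$ there exists a morphism $k$ of $\mathcal{C}$ with $\mathrm{dom}(k)=\mathrm{cod}(w')$ such that $kw'\in\mathcal{W}$. (L0): $\mathcal{W}$ contains all identity morphisms and is closed under composition. (L1): For every $w\in\mathcal{W}$ and every morphism $f$ with $\mathrm{dom}(f)=\mathrm{dom}(w)$ there exist $w'\in\mathcal{W}$ and a morphism $f'$ with $\mathrm{dom}(f')=\mathrm{cod}(w)$, $\mathrm{dom}(w')=\mathrm{cod}(f)$ and $\mathrm{cod}(f')=\mathrm{cod}(w')$ such that $w'f=f'w$.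
   Context: A split monomorphism is a morphism $m$ that has a left inverse, i.e. a morphism $e$ with $em=\mathrm{id}_{\mathrm{dom}(m)}$. *)

theory Defs
  imports Main
begin

text \<open>A (small or large) category given by explicit data: a set of objects, a set of
  morphisms, domain, codomain, identities and composition (comp g f = g f, i.e. f first).\<close>

record ('o, 'm) cat =
  Ob   :: "'o set"
  Mor  :: "'m set"
  Dom  :: "'m \<Rightarrow> 'o"
  Cod  :: "'m \<Rightarrow> 'o"
  Idm  :: "'o \<Rightarrow> 'm"
  Comp :: "'m \<Rightarrow> 'm \<Rightarrow> 'm"

definition category :: "('o, 'm) cat \<Rightarrow> bool" where
  "category C \<longleftrightarrow>
     (\<forall>f \<in> Mor C. Dom C f \<in> Ob C \<and> Cod C f \<in> Ob C) \<and>
     (\<forall>a \<in> Ob C. Idm C a \<in> Mor C \<and> Dom C (Idm C a) = a \<and> Cod C (Idm C a) = a) \<and>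
     (\<forall>f \<in> Mor C. \<forall>g \<in> Mor C. Cod C f = Dom C g \<longrightarrow>
        Comp C g f \<in> Mor C \<and> Dom C (Comp C g f) = Dom C f \<and> Cod C (Comp C g f) = Cod C g) \<and>
     (\<forall>f \<in> Mor C. Comp C f (Idm C (Dom C f)) = f \<and> Comp C (Idm C (Cod C f)) f = f) \<and>
     (\<forall>f \<in> Mor C. \<forall>g \<in> Mor C. \<forall>h \<in> Mor C. Cod C f = Dom C g \<longrightarrow> Cod C g = Dom C h \<longrightarrow>
        Comp C h (Comp C g f) = Comp C (Comp C h g) f)"

definition split_mono :: "('o, 'm) cat \<Rightarrow> 'm \<Rightarrow> bool" where
  "split_mono C m \<longleftrightarrow> m \<in> Mor C \<and>
     (\<exists>e \<in> Mor C. Dom C e = Cod C m \<and> Cod C e = Dom C m \<and> Comp C e m = Idm C (Dom C m))"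

definition L0 :: "('o, 'm) cat \<Rightarrow> 'm set \<Rightarrow> bool" where
  "L0 C W \<longleftrightarrow> (\<forall>a \<in> Ob C. Idm C a \<in> W) \<and>
     (\<forall>f \<in> W. \<forall>g \<in> W. Cod C f = Dom C g \<longrightarrow> Comp C g f \<in> W)"

definition L1 :: "('o, 'm) cat \<Rightarrow> 'm set \<Rightarrow> bool" where
  "L1 C W \<longleftrightarrow> (\<forall>w \<in> W. \<forall>f \<in> Mor C. Dom C f = Dom C w \<longrightarrow>
     (\<exists>w' \<in> W. \<exists>f' \<in> Mor C. Dom C f' = Cod C w \<and> Dom C w' = Cod C f \<and>
        Cod C f' = Cod C w' \<and> Comp C w' f = Comp C f' w))"

inductive_set WL :: "('o, 'm) cat \<Rightarrow> 'm set \<Rightarrow> 'm set" for C W where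
  base_W: "w \<in> W \<Longrightarrow> w \<in> WL C W"
| base_split: "split_mono C m \<Longrightarrow> m \<in> WL C W"
| comp: "f \<in> WL C W \<Longrightarrow> g \<in> WL C W \<Longrightarrow> Cod C f = Dom C g \<Longrightarrow> Comp C g f \<in> WL C W"

end

theory Submission
  imports Defs
begin

text \<open>Call f left-completable if some k with k f \<in> W exists. Identities are
  left-completable, and post-composing a left-completable morphism with a member of W_L keeps it
  so: for w \<in> W, (L1) turns k x \<in> W into w' k = f' w, whence f' (w x) = w' (k x) \<in> W by (L0);
  for a split mono m with retraction e, (k e) (m x) = k x. Applying this to an identity gives
  the theorem.\<close>

definition left_completable :: "('o, 'm) cat \<Rightarrow> 'm set \<Rightarrow> 'm \<Rightarrow> bool" where
  "left_completable C W f \<longleftrightarrow> (\<exists>k \<in> Mor C. Dom C k = Cod C f \<and> Comp C k f \<in> W)"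

context
  fixes C :: "('o, 'm) cat"
  assumes C: "category C"
begin

lemma Comp_in_Mor: "f \<in> Mor C \<Longrightarrow> g \<in> Mor C \<Longrightarrow> Cod C f = Dom C g \<Longrightarrow> Comp C g f \<in> Mor C"
  using C unfolding category_def by blast

lemma Dom_Comp: "f \<in> Mor C \<Longrightarrow> g \<in> Mor C \<Longrightarrow> Cod C f = Dom C g \<Longrightarrow> Dom C (Comp C g f) = Dom C f"
  using C unfolding category_def by blast

lemma Cod_Comp: "f \<in> Mor C \<Longrightarrow> g \<in> Mor C \<Longrightarrow> Cod C f = Dom C g \<Longrightarrow> Cod C (Comp C g f) = Cod C g"
  using C unfolding category_def by blast

lemma Comp_assoc:
  "f \<in> Mor C \<Longrightarrow> g \<in> Mor C \<Longrightarrow> h \<in> Mor C \<Longrightarrow> Cod C f = Dom C g \<Longrightarrow> Cod C g = Dom C h \<Longrightarrow>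
    Comp C h (Comp C g f) = Comp C (Comp C h g) f"
  using C unfolding category_def by blast

lemma Comp_Idm_left: "f \<in> Mor C \<Longrightarrow> Comp C (Idm C (Cod C f)) f = f"
  using C unfolding category_def by blast

lemma Comp_Idm_right: "f \<in> Mor C \<Longrightarrow> Comp C f (Idm C (Dom C f)) = f"
  using C unfolding category_def by blast

lemma Idm_in_Mor: "a \<in> Ob C \<Longrightarrow> Idm C a \<in> Mor C"
  and Dom_Idm: "a \<in> Ob C \<Longrightarrow> Dom C (Idm C a) = a"
  and Cod_Idm: "a \<in> Ob C \<Longrightarrow> Cod C (Idm C a) = a"
  using C unfolding category_def by blast+

lemma Dom_in_Ob: "f \<in> Mor C \<Longrightarrow> Dom C f \<in> Ob C"
  using C unfolding category_def by blast

lemma WL_subset_Mor: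
  assumes "W \<subseteq> Mor C"
  shows "WL C W \<subseteq> Mor C"
proof
  fix g assume "g \<in> WL C W"
  then show "g \<in> Mor C"
  proof (induction rule: WL.induct)
    case (comp f g)
    then show ?case using Comp_in_Mor by blast
  qed (use assms in \<open>auto simp: split_mono_def\<close>)
qed

lemma left_completable_Idm:
  assumes "L0 C W" and "a \<in> Ob C"
  shows "left_completable C W (Idm C a)"
proof -
  have i: "Idm C a \<in> Mor C" "Cod C (Idm C a) = a"
    using Idm_in_Mor Cod_Idm assms(2) by auto
  have "Comp C (Idm C a) (Idm C a) = Idm C a"
    using Comp_Idm_left[OF i(1)] i(2) by simp
  moreover have "Idm C a \<in> W"
    using assms unfolding L0_def by blast
  ultimately show ?thesis
    using i Dom_Idm[OF assms(2)] unfolding left_completable_def by auto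
qed

lemma left_completable_Comp_W:
  assumes WM: "W \<subseteq> Mor C" and L0: "L0 C W" and L1: "L1 C W"
    and w: "w \<in> W" and x: "x \<in> Mor C" "Cod C x = Dom C w" and "left_completable C W x"
  shows "left_completable C W (Comp C w x)"
proof -
  obtain k where k: "k \<in> Mor C" "Dom C k = Cod C x" "Comp C k x \<in> W"
    using \<open>left_completable C W x\<close> unfolding left_completable_def by blast
  obtain w' f' where w': "w' \<in> W" "Dom C w' = Cod C k"
    and f': "f' \<in> Mor C" "Dom C f' = Cod C w" "Cod C f' = Cod C w'"
    and square: "Comp C w' k = Comp C f' w"
    using L1 w k x(2) unfolding L1_def by fastforce
  have wM: "w \<in> Mor C" and w'M: "w' \<in> Mor C" using w w' WM by auto
  have "Comp C f' (Comp C w x) = Comp C (Comp C w' k) x"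
    using Comp_assoc[OF x(1) wM f'(1) x(2) f'(2)[symmetric]] square by simp
  also have "\<dots> = Comp C w' (Comp C k x)"
    using Comp_assoc[OF x(1) k(1) w'M] k(2) w'(2) by simp
  also have "\<dots> \<in> W"
    using L0 w'(1) k(3) Cod_Comp[OF x(1) k(1)] k(2) w'(2) unfolding L0_def by simp
  finally show ?thesis
    using f' Cod_Comp[OF x(1) wM x(2)] unfolding left_completable_def by auto
qed

lemma left_completable_Comp_split_mono:
  assumes m: "split_mono C m" and x: "x \<in> Mor C" "Cod C x = Dom C m"
    and "left_completable C W x"
  shows "left_completable C W (Comp C m x)"
proof -
  obtain k where k: "k \<in> Mor C" "Dom C k = Cod C x" "Comp C k x \<in> W"
    using \<open>left_completable C W x\<close> unfolding left_completable_def by blast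
  obtain e where mM: "m \<in> Mor C" and e: "e \<in> Mor C" "Dom C e = Cod C m" "Cod C e = Dom C m"
    and retraction: "Comp C e m = Idm C (Dom C m)"
    using m unfolding split_mono_def by blast
  have mx: "Comp C m x \<in> Mor C" "Cod C (Comp C m x) = Cod C m"
    using Comp_in_Mor[OF x(1) mM x(2)] Cod_Comp[OF x(1) mM x(2)] by auto
  have "Comp C (Comp C k e) (Comp C m x) = Comp C k (Comp C (Comp C e m) x)"
    using Comp_assoc[OF mx(1) e(1) k(1)] Comp_assoc[OF x(1) mM e(1) x(2)] mx(2) e k(2) x(2)
    by simp
  also have "\<dots> = Comp C k x"
    using retraction Comp_Idm_left[OF x(1)] x(2) by simp
  finally have "Comp C (Comp C k e) (Comp C m x) \<in> W" using k(3) by simp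
  then show ?thesis
    using Comp_in_Mor[OF e(1) k(1)] Dom_Comp[OF e(1) k(1)] e k(2) x(2) mx(2)
    unfolding left_completable_def by auto
qed

lemma left_completable_Comp_WL:
  assumes WM: "W \<subseteq> Mor C" and L0: "L0 C W" and L1: "L1 C W"
    and g: "g \<in> WL C W"
  shows "x \<in> Mor C \<Longrightarrow> Cod C x = Dom C g \<Longrightarrow> left_completable C W x \<Longrightarrow>
    left_completable C W (Comp C g x)"
  using g
proof (induction arbitrary: x rule: WL.induct)
  case (base_W w)
  then show ?case using left_completable_Comp_W[OF WM L0 L1] by blast
next
  case (base_split m)
  then show ?case using left_completable_Comp_split_mono by blast
next
  case (comp f g)
  have fM: "f \<in> Mor C" and gM: "g \<in> Mor C"
    using comp.hyps(1,2) WL_subset_Mor[OF WM] by auto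
  have x: "Cod C x = Dom C f"
    using comp.prems(2) Dom_Comp[OF fM gM comp.hyps(3)] by simp
  have "left_completable C W (Comp C g (Comp C f x))"
    using comp.IH(2) comp.IH(1)[OF comp.prems(1) x comp.prems(3)]
      Comp_in_Mor[OF comp.prems(1) fM x] Cod_Comp[OF comp.prems(1) fM x] comp.hyps(3)
    by simp
  then show ?case
    using Comp_assoc[OF comp.prems(1) fM gM x comp.hyps(3)] by simp
qed

end

theorem mainTheorem1:
  fixes C :: "('o, 'm) cat" and W :: "'m set"
  assumes "category C"
    and "W \<subseteq> Mor C"
    and "L0 C W"
    and "L1 C W"
    and "w' \<in> WL C W"
  shows "\<exists>k \<in> Mor C. Dom C k = Cod C w' \<and> Comp C k w' \<in> W"
proof -
  have w'M: "w' \<in> Mor C"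
    using WL_subset_Mor[OF assms(1,2)] assms(5) by blast
  let ?i = "Idm C (Dom C w')"
  have a: "Dom C w' \<in> Ob C"
    using Dom_in_Ob[OF assms(1) w'M] .
  have i: "?i \<in> Mor C" "Cod C ?i = Dom C w'"
    using Idm_in_Mor[OF assms(1) a] Cod_Idm[OF assms(1) a] by auto
  have "left_completable C W (Comp C w' ?i)"
    using left_completable_Comp_WL[OF assms i]
      left_completable_Idm[OF assms(1,3) a] by blast
  then show ?thesis
    using Comp_Idm_right[OF assms(1) w'M] unfolding left_completable_def by simp
qed

end
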